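(* Let $(X,d)$ be a metric space. If $\operatorname{asdim}_{AN}(X,\log(1+d))\le n$, then $(X,d)$ has an $n$-dimensional control function which is a polynomial.
   Context: For $s>0$, an $s$-scale chain between points $x,y$ of a metric space is a finite sequence $x=x_0,\dots,x_m=y$ with $d(x_i,x_{i+1})<s$. The $s$-scale connected components of a subset $U$ are the classes of the relation "joined by an $s$-scale chain inside $U$". A nondecreasing $D\colon\mathbb{R}_+\to\mathbb{R}_+$ is an $n$-dimensional control function of $X$ if for every $s>0$ there is a cover $\{\mathcal U_0,\dots,\mathcal U_n\}$ of $X$ such that the $s$-scale connected components of each $\mathcal U_i$ have diameter at most $D(s)$. $\operatorname{asdim}_{AN}(X,d)\le n$ means $X$ has an $n$-dimensional control function of the form $D(s)=Cs+k$ with constants $C>0$, $k\in\mathbb{R}$. $\log(1+d)$ denotes the metric $(x,y)\mapsto\log(1+d(x,y))$. *)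

theory Defs
  imports "HOL-Analysis.Analysis" "HOL-Computational_Algebra.Polynomial"
begin

definition scale_chain ::
  "('a \<Rightarrow> 'a \<Rightarrow> real) \<Rightarrow> real \<Rightarrow> 'a set \<Rightarrow> 'a \<Rightarrow> 'a \<Rightarrow> bool" where
  "scale_chain d s U x y \<longleftrightarrow>
     (\<exists>xs::'a list. xs \<noteq> [] \<and> hd xs = x \<and> last xs = y \<and> set xs \<subseteq> U \<and>
        (\<forall>i. Suc i < length xs \<longrightarrow> d (xs ! i) (xs ! Suc i) < s))"

definition scale_components ::
  "('a \<Rightarrow> 'a \<Rightarrow> real) \<Rightarrow> real \<Rightarrow> 'a set \<Rightarrow> 'a set set" where
  "scale_components d s U = {{y. scale_chain d s U x y} | x. x \<in> U}"

definition diam_le :: "('a \<Rightarrow> 'a \<Rightarrow> real) \<Rightarrow> 'a set \<Rightarrow> real \<Rightarrow> bool" where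
  "diam_le d C r \<longleftrightarrow> (\<forall>x\<in>C. \<forall>y\<in>C. d x y \<le> r)"

definition control_cover ::
  "'a set \<Rightarrow> ('a \<Rightarrow> 'a \<Rightarrow> real) \<Rightarrow> nat \<Rightarrow> (real \<Rightarrow> real) \<Rightarrow> bool" where
  "control_cover X d n D \<longleftrightarrow>
     (\<forall>s>0. \<exists>U :: nat \<Rightarrow> 'a set. (\<Union>i\<le>n. U i) = X \<and>
        (\<forall>i\<le>n. \<forall>C\<in>scale_components d s (U i). diam_le d C (D s)))"

definition control_function ::
  "'a set \<Rightarrow> ('a \<Rightarrow> 'a \<Rightarrow> real) \<Rightarrow> nat \<Rightarrow> (real \<Rightarrow> real) \<Rightarrow> bool" where
  "control_function X d n D \<longleftrightarrow>
     mono_on {0..} D \<and> (\<forall>s\<ge>0. D s \<ge> 0) \<and> control_cover X d n D"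

text \<open>asdim_AN (X,d) \<le> n: a control function of the form D(s) = C s + k, C > 0, k real.
  (Since k may be negative, the codomain requirement R_+ is not imposed here.)\<close>
definition asdim_AN_le :: "'a set \<Rightarrow> ('a \<Rightarrow> 'a \<Rightarrow> real) \<Rightarrow> nat \<Rightarrow> bool" where
  "asdim_AN_le X d n \<longleftrightarrow>
     (\<exists>C k. C > 0 \<and> control_cover X d n (\<lambda>s. C * s + k))"

end

theory Submission
  imports Defs
begin

(* Write e = ln(1 + d).  Since u \<mapsto> ln(1 + u) is strictly increasing on
   [0, \<infinity>), an e-chain at scale ln(1 + t) is the same as a d-chain at scale t, so the
   s-scale components for e at s = ln(1 + t) are exactly the t-scale components for d,
   and e-diameter \<le> r means d-diameter \<le> exp r - 1.  Hence a control function D for e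
   yields the control function t \<mapsto> exp (D (ln (1 + t))) - 1 for d.  For the linear
   D(s) = C s + k this equals exp k * (1 + t) powr C - 1, which is dominated by the
   polynomial exp k * (1 + t)^N with N = \<lceil>C\<rceil>; that polynomial is nonnegative and
   nondecreasing on [0, \<infinity>), and enlarging a control function preserves the covering
   property.  The file proves these facts in this order and combines them at the end. *)

text \<open>Scale chains only depend on which pairs are closer than the scale, so they are
  unchanged by any reparametrization of the distance that preserves this comparison.\<close>
lemma scale_chain_cong_dist:
  assumes "\<And>x y. e x y < s \<longleftrightarrow> d x y < t"
  shows "scale_chain e s U = scale_chain d t U"
  using assms unfolding scale_chain_def by (simp add: fun_eq_iff)

lemma scale_components_cong_dist:
  assumes "\<And>x y. e x y < s \<longleftrightarrow> d x y < t"
  shows "scale_components e s U = scale_components d t U"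
  unfolding scale_components_def scale_chain_cong_dist[OF assms] ..

lemma scale_components_ln1p:
  assumes nonneg: "\<And>x y. 0 \<le> d x y" and "t > 0"
  shows "scale_components (\<lambda>x y. ln (1 + d x y)) (ln (1 + t)) U = scale_components d t U"
  by (rule scale_components_cong_dist) (use nonneg \<open>t > 0\<close> in \<open>simp add: add_pos_nonneg\<close>)

lemma diam_le_ln1p:
  assumes nonneg: "\<And>x y. 0 \<le> d x y"
    and "diam_le (\<lambda>x y. ln (1 + d x y)) C r"
  shows "diam_le d C (exp r - 1)"
  unfolding diam_le_def
proof (intro ballI)
  fix x y assume "x \<in> C" "y \<in> C"
  then have "ln (1 + d x y) \<le> r" using assms(2) unfolding diam_le_def by blast
  then have "exp (ln (1 + d x y)) \<le> exp r" by simp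
  then show "d x y \<le> exp r - 1" using nonneg[of x y] by simp
qed

lemma control_cover_ln1p:
  assumes nonneg: "\<And>x y. 0 \<le> d x y"
    and cover: "control_cover X (\<lambda>x y. ln (1 + d x y)) n D"
  shows "control_cover X d n (\<lambda>t. exp (D (ln (1 + t))) - 1)"
  unfolding control_cover_def
proof (intro allI impI)
  fix t :: real assume "t > 0"
  then have "ln (1 + t) > 0" by simp
  then obtain U where union: "(\<Union>i\<le>n. U i) = X"
    and diam: "\<forall>i\<le>n. \<forall>C\<in>scale_components (\<lambda>x y. ln (1 + d x y)) (ln (1 + t)) (U i).
                 diam_le (\<lambda>x y. ln (1 + d x y)) C (D (ln (1 + t)))"
    using cover unfolding control_cover_def by blast
  have "\<forall>i\<le>n. \<forall>C\<in>scale_components d t (U i). diam_le d C (exp (D (ln (1 + t))) - 1)"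
    using diam diam_le_ln1p[of d, OF nonneg]
    unfolding scale_components_ln1p[OF nonneg \<open>t > 0\<close>] by blast
  with union show "\<exists>U. (\<Union>i\<le>n. U i) = X \<and>
      (\<forall>i\<le>n. \<forall>C\<in>scale_components d t (U i). diam_le d C (exp (D (ln (1 + t))) - 1))"
    by blast
qed

lemma control_cover_mono:
  assumes cover: "control_cover X d n D" and le: "\<And>s. s > 0 \<Longrightarrow> D s \<le> E s"
  shows "control_cover X d n E"
  unfolding control_cover_def
proof (intro allI impI)
  fix s :: real assume "s > 0"
  then obtain U where "(\<Union>i\<le>n. U i) = X"
    and "\<forall>i\<le>n. \<forall>C\<in>scale_components d s (U i). diam_le d C (D s)"
    using cover unfolding control_cover_def by blast
  moreover have "diam_le d C (D s) \<Longrightarrow> diam_le d C (E s)" for C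
    using le[OF \<open>s > 0\<close>] unfolding diam_le_def by fastforce
  ultimately show "\<exists>U. (\<Union>i\<le>n. U i) = X \<and>
      (\<forall>i\<le>n. \<forall>C\<in>scale_components d s (U i). diam_le d C (E s))"
    by blast
qed

lemma exp_linear_ln1p_le_power:
  fixes t C k :: real
  assumes "t \<ge> 0" and "C \<le> real N"
  shows "exp (C * ln (1 + t) + k) - 1 \<le> exp k * (1 + t) ^ N"
proof -
  have "exp (C * ln (1 + t) + k) = exp k * (1 + t) powr C"
    using assms(1) by (simp add: powr_def exp_add mult.commute)
  also have "\<dots> \<le> exp k * (1 + t) powr real N"
    using assms by (intro mult_left_mono powr_mono) auto
  also have "\<dots> = exp k * (1 + t) ^ N"
    using assms(1) by (simp add: powr_realpow)
  finally show ?thesis by simp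
qed

lemma poly_scaled_power_1p:
  "poly (smult c ([:1, 1:] ^ N)) t = c * (1 + t) ^ N"
  by (simp add: algebra_simps)

lemma scaled_power_1p_mono_nonneg:
  fixes c :: real
  assumes "c \<ge> 0"
  shows "mono_on {0..} (\<lambda>t. c * (1 + t) ^ N)" and "\<forall>t\<ge>0. c * (1 + t) ^ N \<ge> 0"
  using assms by (auto intro!: mono_onI mult_left_mono power_mono)

theorem corollary2p4:
  fixes X :: "'a set" and d :: "'a \<Rightarrow> 'a \<Rightarrow> real" and n :: nat
  assumes "Metric_space X d"
    and "asdim_AN_le X (\<lambda>x y. ln (1 + d x y)) n"
  shows "\<exists>p :: real poly. control_function X d n (poly p)"
proof -
  have nonneg: "\<And>x y. 0 \<le> d x y" using Metric_space.nonneg[OF assms(1)] by blast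
  obtain C k where cover_ln: "control_cover X (\<lambda>x y. ln (1 + d x y)) n (\<lambda>s. C * s + k)"
    using assms(2) unfolding asdim_AN_le_def by blast
  define N where "N = nat \<lceil>C\<rceil>"
  have "C \<le> real N" unfolding N_def by linarith
  define p where "p = smult (exp k) ([:1, 1:] ^ N)"
  have poly_p: "poly p = (\<lambda>t. exp k * (1 + t) ^ N)"
    unfolding p_def poly_scaled_power_1p ..
  have "control_cover X d n (poly p)"
  proof (rule control_cover_mono[OF control_cover_ln1p[OF nonneg cover_ln]])
    fix t :: real assume "t > 0"
    then show "exp (C * ln (1 + t) + k) - 1 \<le> poly p t"
      unfolding poly_p using exp_linear_ln1p_le_power \<open>C \<le> real N\<close> by simp
  qed
  moreover have "mono_on {0..} (poly p)" and "\<forall>t\<ge>0. poly p t \<ge> 0"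
    unfolding poly_p using scaled_power_1p_mono_nonneg[of "exp k" N] by simp_all
  ultimately show ?thesis
    unfolding control_function_def by blast
qed

end
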